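(* Let $q$ be a prime power, $n\ge 1$, and $1\le k\le n(q-1)$. Then $C_{n,k}^q$ is self-orthogonal (i.e. $C_{n,k}^q\subseteq (C_{n,k}^q)^\perp$) if and only if $1\le k\le \frac{n(q-1)}{2}$ and $2k\equiv 0\pmod{q-1}$. In particular, in that case $\operatorname{Hull}(C_{n,k}^q)=C_{n,k}^q$.
   Context: For a prime power $q$ and integers $n\ge 1$, $k\ge 0$, the projective Reed-Muller code $C_{n,k}^q\subseteq \mathbb{F}_q^N$, $N=\frac{q^{n+1}-1}{q-1}$, is defined as follows. For each point of $\mathbb{P}^n(\mathbb{F}_q)$ choose the affine representative $(p_0,\dots,p_n)\in\mathbb{F}_q^{n+1}\setminus\{0\}$ whose left-most nonzero coordinate equals $1$, and fix an ordering $P_1',\dots,P_N'$ of these representatives. Then $C_{n,k}^q=\{(F(P_1'),\dots,F(P_N')) : F\in \mathbb{F}_q[x_0,\dots,x_n]_k\}$, where $\mathbb{F}_q[x_0,\dots,x_n]_k$ is the space of homogeneous polynomials of degree $k$ together with $0$. Duals are taken with respect to the standard dot product on $\mathbb{F}_q^N$, and $\operatorname{Hull}(C)=C\cap C^\perp$. *)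

theory Defs
  imports Main "HOL-Library.Cardinality"
begin

text \<open>Standard representatives of the points of P^n(F_q): vectors (p_0,...,p_n),
  encoded as functions nat => 'a vanishing beyond n, whose left-most nonzero
  coordinate equals 1.\<close>
definition proj_reps :: "nat \<Rightarrow> (nat \<Rightarrow> 'a::field) set" where
  "proj_reps n = {p. (\<forall>i>n. p i = 0) \<and> (\<exists>j\<le>n. p j = 1 \<and> (\<forall>i<j. p i = 0))}"

definition hom_exps :: "nat \<Rightarrow> nat \<Rightarrow> (nat \<Rightarrow> nat) set" where
  "hom_exps n k = {a. (\<forall>i>n. a i = 0) \<and> (\<Sum>i\<le>n. a i) = k}"

definition eval_hom :: "nat \<Rightarrow> nat \<Rightarrow> ((nat \<Rightarrow> nat) \<Rightarrow> 'a::field) \<Rightarrow> (nat \<Rightarrow> 'a) \<Rightarrow> 'a" where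
  "eval_hom n k c p = (\<Sum>a\<in>hom_exps n k. c a * (\<Prod>i\<le>n. p i ^ a i))"

text \<open>Words of F_q^N are functions on the set of point representatives
  (extended by 0 outside it).\<close>
definition proj_RM :: "nat \<Rightarrow> nat \<Rightarrow> ((nat \<Rightarrow> 'a::field) \<Rightarrow> 'a) set" where
  "proj_RM n k = {v. \<exists>c. v = (\<lambda>p. if p \<in> proj_reps n then eval_hom n k c p else 0)}"

definition dual_code :: "nat \<Rightarrow> ((nat \<Rightarrow> 'a::field) \<Rightarrow> 'a) set \<Rightarrow> ((nat \<Rightarrow> 'a) \<Rightarrow> 'a) set" where
  "dual_code n C = {v. (\<forall>p. p \<notin> proj_reps n \<longrightarrow> v p = 0) \<and>
      (\<forall>w\<in>C. (\<Sum>p\<in>proj_reps n. v p * w p) = 0)}"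

definition hull_code :: "nat \<Rightarrow> ((nat \<Rightarrow> 'a::field) \<Rightarrow> 'a) set \<Rightarrow> ((nat \<Rightarrow> 'a) \<Rightarrow> 'a) set" where
  "hull_code n C = C \<inter> dual_code n C"

end

theory Submission
  imports Defs "HOL-Library.FuncSet" "HOL-Computational_Algebra.Polynomial"
begin

text \<open>Expanding the dot product, the code is self-orthogonal iff the projective power sum
  S(e), the sum of x^e over the point representatives, vanishes for every exponent vector
  e = a + b with a, b of degree k. Over F_q the sum of x^m over all x is -1 if m is a
  positive multiple of q - 1 and 0 otherwise. If q - 1 divides the degree of e, the sum of
  x^e over the nonzero vectors of F_q^(n+1) equals (q - 1) S(e) = -S(e); over all vectors it
  factors into one-variable power sums and so vanishes once some exponent is below q - 1, which
  is forced when 2k \<le> n(q - 1). Conversely, grouping the representatives by the position of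
  their leading 1 gives S(2k x_n) = 1 when q - 1 does not divide 2k, and
  S(e) = (-1)^n for e = (2k - n(q - 1), q - 1, ..., q - 1) when 2k > n(q - 1).\<close>

section \<open>Power sums over a finite field\<close>

lemma of_nat_CARD_eq_0: "of_nat CARD('a::{finite,field}) = (0::'a)"
proof -
  have "(\<Sum>x\<in>(UNIV::'a set). x + 1) = (\<Sum>x\<in>UNIV. x)"
    by (rule sum.reindex_bij_witness[of _ "\<lambda>x. x - 1" "\<lambda>x. x + 1"]) auto
  then show ?thesis by (simp add: sum.distrib)
qed

lemma CARD_field_ge_2: "CARD('a::{finite,field}) \<ge> 2"
proof -
  have "card {0::'a, 1} \<le> CARD('a)"
    by (rule card_mono) auto
  then show ?thesis by simp
qed

lemma power_CARD_minus_1: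
  fixes c :: "'a::{finite,field}"
  assumes "c \<noteq> 0"
  shows "c ^ (CARD('a) - 1) = 1"
proof -
  let ?U = "UNIV - {0::'a}"
  have "(\<Prod>x\<in>?U. x) = (\<Prod>x\<in>?U. c * x)"
    by (rule sym, rule prod.reindex_bij_witness[of _ "\<lambda>x. x / c" "\<lambda>x. c * x"]) (use assms in auto)
  also have "\<dots> = c ^ (CARD('a) - 1) * (\<Prod>x\<in>?U. x)"
    by (simp add: prod.distrib card_Diff_subset)
  finally show ?thesis by simp
qed

lemma power_mod_CARD_minus_1:
  fixes c :: "'a::{finite,field}"
  assumes "c \<noteq> 0"
  shows "c ^ m = c ^ (m mod (CARD('a) - 1))"
proof -
  let ?r = "CARD('a) - 1"
  have "c ^ m = c ^ (?r * (m div ?r) + m mod ?r)"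
    by simp
  also have "\<dots> = (c ^ ?r) ^ (m div ?r) * c ^ (m mod ?r)"
    by (simp only: power_add power_mult)
  also have "\<dots> = c ^ (m mod ?r)"
    by (simp only: power_CARD_minus_1[OF assms] power_one mult_1)
  finally show ?thesis .
qed

definition sum_powers :: "nat \<Rightarrow> 'a::{finite,field}" where
  "sum_powers m = (\<Sum>x\<in>UNIV. x ^ m)"

lemma sum_powers_eq_0_if_less:
  assumes "m < CARD('a::{finite,field}) - 1"
  shows "(sum_powers m :: 'a) = 0"
proof (cases "m = 0")
  case True
  then show ?thesis by (simp add: sum_powers_def of_nat_CARD_eq_0)
next
  case False
  let ?p = "monom (1::'a) m - 1"
  have "coeff ?p m = 1"
    using False by (cases m) auto
  then have "?p \<noteq> 0"
    by (metis coeff_0 zero_neq_one)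
  moreover have "degree ?p \<le> m"
    by (rule degree_diff_le) (simp_all add: degree_monom_le)
  ultimately have roots: "card {x. poly ?p x = 0} \<le> m"
    using card_poly_roots_bound[of ?p] by linarith
  have "\<exists>c. c \<noteq> 0 \<and> c ^ m \<noteq> (1::'a)"
  proof (rule ccontr)
    assume "\<not> ?thesis"
    then have "UNIV - {0} \<subseteq> {x. poly ?p x = 0}"
      by (auto simp: poly_monom)
    from card_mono[OF _ this] roots assms show False
      by (simp add: card_Diff_subset)
  qed
  then obtain c :: 'a where c: "c \<noteq> 0" "c ^ m \<noteq> 1"
    by blast
  \<comment> \<open>the substitution x := c x multiplies the sum by c^m \<noteq> 1\<close>
  have "(\<Sum>x\<in>UNIV. (c * x) ^ m) = (\<Sum>x\<in>(UNIV::'a set). x ^ m)"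
    by (rule sum.reindex_bij_witness[of _ "\<lambda>x. x / c" "\<lambda>x. c * x"]) (use c in auto)
  then have "c ^ m * sum_powers m = sum_powers m"
    by (simp add: sum_powers_def power_mult_distrib sum_distrib_left)
  then have "(c ^ m - 1) * sum_powers m = 0"
    by (simp add: algebra_simps)
  then show ?thesis using c by simp
qed

lemma sum_powers_eq_0_if_not_dvd:
  assumes "\<not> (CARD('a::{finite,field}) - 1) dvd m"
  shows "(sum_powers m :: 'a) = 0"
proof -
  have "m mod (CARD('a) - 1) \<noteq> 0"
    using assms by (simp add: dvd_eq_mod_eq_0)
  moreover have "m \<noteq> 0"
    using assms by (metis dvd_0_right)
  ultimately have "sum_powers m = (sum_powers (m mod (CARD('a) - 1)) :: 'a)"
    unfolding sum_powers_def
    by (intro sum.cong refl) (metis power_mod_CARD_minus_1 power_0_left)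
  also have "\<dots> = 0"
    using CARD_field_ge_2[where 'a='a] by (intro sum_powers_eq_0_if_less) simp
  finally show ?thesis .
qed

lemma sum_powers_CARD_minus_1: "(sum_powers (CARD('a::{finite,field}) - 1) :: 'a) = -1"
proof -
  have q: "CARD('a) - 1 \<noteq> 0"
    using CARD_field_ge_2[where 'a='a] by simp
  have "(sum_powers (CARD('a) - 1) :: 'a) = (\<Sum>x\<in>(UNIV::'a set). if x = 0 then 0 else 1)"
    unfolding sum_powers_def
  proof (rule sum.cong)
    show "x ^ (CARD('a) - 1) = (if x = 0 then 0 else 1)" for x :: 'a
      using q power_CARD_minus_1[of x] by (cases "x = 0") auto
  qed simp
  also have "\<dots> = of_nat (CARD('a) - 1)"
    by (simp add: sum.If_cases Compl_eq_Diff_UNIV card_Diff_subset del: card_Diff_insert)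
  also have "\<dots> = of_nat CARD('a) - 1"
    using CARD_field_ge_2[where 'a='a] by simp
  finally show ?thesis by (simp add: of_nat_CARD_eq_0)
qed

definition agree_outside :: "'i set \<Rightarrow> ('i \<Rightarrow> 'a) \<Rightarrow> ('i \<Rightarrow> 'a) set" where
  "agree_outside I d = {p. \<forall>i. i \<notin> I \<longrightarrow> p i = d i}"

lemma bij_betw_restrict_agree_outside:
  "bij_betw (\<lambda>p. restrict p I) (agree_outside I d) (I \<rightarrow>\<^sub>E UNIV)"
proof (rule bij_betw_byWitness[where f' = "\<lambda>g i. if i \<in> I then g i else d i"])
  show "\<forall>p\<in>agree_outside I d. (\<lambda>i. if i \<in> I then restrict p I i else d i) = p"
    by (auto simp: agree_outside_def fun_eq_iff)
  show "\<forall>g\<in>I \<rightarrow>\<^sub>E UNIV. restrict (\<lambda>i. if i \<in> I then g i else d i) I = g"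
    by (auto simp: fun_eq_iff PiE_def extensional_def)
  show "(\<lambda>p. restrict p I) ` agree_outside I d \<subseteq> I \<rightarrow>\<^sub>E UNIV"
    by auto
  show "(\<lambda>g i. if i \<in> I then g i else d i) ` (I \<rightarrow>\<^sub>E UNIV) \<subseteq> agree_outside I d"
    by (auto simp: agree_outside_def)
qed

lemma finite_agree_outside:
  assumes "finite I"
  shows "finite (agree_outside I (d :: 'i \<Rightarrow> 'a::finite))"
  using assms by (simp add: bij_betw_finite[OF bij_betw_restrict_agree_outside] finite_PiE)

lemma sum_prod_agree_outside:
  fixes f :: "'i \<Rightarrow> 'a::finite \<Rightarrow> 'b::comm_semiring_1"
  assumes "finite I"
  shows "(\<Sum>p\<in>agree_outside I d. \<Prod>i\<in>I. f i (p i)) = (\<Prod>i\<in>I. \<Sum>x\<in>UNIV. f i x)"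
proof -
  have "(\<Sum>p\<in>agree_outside I d. \<Prod>i\<in>I. f i (p i))
      = (\<Sum>p\<in>agree_outside I d. \<Prod>i\<in>I. f i (restrict p I i))"
    by simp
  also have "\<dots> = (\<Sum>g\<in>I \<rightarrow>\<^sub>E UNIV. \<Prod>i\<in>I. f i (g i))"
    by (rule sum.reindex_bij_betw[OF bij_betw_restrict_agree_outside])
  also have "\<dots> = (\<Prod>i\<in>I. \<Sum>x\<in>UNIV. f i x)"
    by (rule prod_sum_PiE[symmetric]) (use assms in auto)
  finally show ?thesis .
qed

section \<open>Projective power sums\<close>

definition monomial_at :: "nat \<Rightarrow> (nat \<Rightarrow> nat) \<Rightarrow> (nat \<Rightarrow> 'a) \<Rightarrow> 'a::comm_semiring_1" where
  "monomial_at n e p = (\<Prod>i\<le>n. p i ^ e i)"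

definition proj_power_sum :: "nat \<Rightarrow> (nat \<Rightarrow> nat) \<Rightarrow> 'a::{finite,field}" where
  "proj_power_sum n e = (\<Sum>p\<in>proj_reps n. monomial_at n e p)"

lemma monomial_at_scale:
  "monomial_at n e (\<lambda>i. c * p i) = c ^ (\<Sum>i\<le>n. e i) * monomial_at n e p"
  by (simp add: monomial_at_def power_mult_distrib prod.distrib power_sum)

lemma monomial_at_add:
  "monomial_at n a p * monomial_at n b p = monomial_at n (\<lambda>i. a i + b i) p"
  by (simp add: monomial_at_def power_add prod.distrib)

definition proj_reps_lead :: "nat \<Rightarrow> nat \<Rightarrow> (nat \<Rightarrow> 'a::field) set" where
  "proj_reps_lead n j = {p. (\<forall>i>n. p i = 0) \<and> p j = 1 \<and> (\<forall>i<j. p i = 0)}"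

lemma proj_reps_eq_UN_lead: "proj_reps n = (\<Union>j\<le>n. proj_reps_lead n j)"
  by (auto simp: proj_reps_def proj_reps_lead_def)

lemma proj_reps_lead_disjoint:
  assumes "j \<noteq> j'"
  shows "proj_reps_lead n j \<inter> proj_reps_lead n j' = {}"
  using assms by (auto simp: proj_reps_lead_def) (metis linorder_neqE_nat zero_neq_one)

lemma proj_reps_lead_eq_agree_outside:
  assumes "j \<le> n"
  shows "proj_reps_lead n j = agree_outside {j<..n} (\<lambda>i. if i = j then 1 else 0)"
  using assms unfolding proj_reps_lead_def agree_outside_def
  by (auto; metis greaterThanAtMost_iff linorder_neqE_nat order.strict_trans2)

lemma sum_monomial_proj_reps_lead:
  assumes "j \<le> n"
  shows "(\<Sum>p\<in>proj_reps_lead n j. monomial_at n e p) =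
    (\<Prod>i<j. (0::'a::{finite,field}) ^ e i) * (\<Prod>i\<in>{j<..n}. sum_powers (e i))"
proof -
  have split: "{..n} = {..<j} \<union> insert j {j<..n}"
    using assms by auto
  have "monomial_at n e p = (\<Prod>i<j. (0::'a) ^ e i) * (\<Prod>i\<in>{j<..n}. p i ^ e i)"
    if "p \<in> proj_reps_lead n j" for p :: "nat \<Rightarrow> 'a"
  proof -
    have "monomial_at n e p = (\<Prod>i<j. p i ^ e i) * (\<Prod>i\<in>insert j {j<..n}. p i ^ e i)"
      unfolding monomial_at_def split by (rule prod.union_disjoint) auto
    also have "\<dots> = (\<Prod>i<j. (0::'a) ^ e i) * (\<Prod>i\<in>{j<..n}. p i ^ e i)"
      using that by (simp add: proj_reps_lead_def)
    finally show ?thesis .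
  qed
  then have "(\<Sum>p\<in>proj_reps_lead n j. monomial_at n e p)
      = (\<Prod>i<j. (0::'a) ^ e i) * (\<Sum>p\<in>proj_reps_lead n j. \<Prod>i\<in>{j<..n}. p i ^ e i)"
    by (simp add: sum_distrib_left)
  also have "(\<Sum>p\<in>proj_reps_lead n j. \<Prod>i\<in>{j<..n}. p i ^ e i) = (\<Prod>i\<in>{j<..n}. sum_powers (e i) :: 'a)"
    unfolding proj_reps_lead_eq_agree_outside[OF assms] sum_powers_def
    by (rule sum_prod_agree_outside) simp
  finally show ?thesis .
qed

lemma proj_power_sum_by_lead:
  "(proj_power_sum n e :: 'a::{finite,field}) =
     (\<Sum>j\<le>n. (\<Prod>i<j. (0::'a) ^ e i) * (\<Prod>i\<in>{j<..n}. sum_powers (e i)))"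
proof -
  have "finite (proj_reps_lead n j :: (nat \<Rightarrow> 'a) set)" for j
    by (rule finite_subset[OF _ finite_agree_outside[of "{..n}" "\<lambda>_. 0"]])
       (auto simp: proj_reps_lead_def agree_outside_def)
  then have "(proj_power_sum n e :: 'a) = (\<Sum>j\<le>n. \<Sum>p\<in>proj_reps_lead n j. monomial_at n e p)"
    unfolding proj_power_sum_def proj_reps_eq_UN_lead
    by (intro sum.UNION_disjoint) (auto dest: proj_reps_lead_disjoint)
  then show ?thesis
    by (simp add: sum_monomial_proj_reps_lead)
qed

lemma proj_power_sum_full_tail:
  assumes "e 0 > 0" and "\<And>i. 1 \<le> i \<Longrightarrow> i \<le> n \<Longrightarrow> e i = CARD('a) - 1"
  shows "(proj_power_sum n e :: 'a::{finite,field}) = (-1) ^ n"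
proof -
  let ?T = "\<lambda>j. (\<Prod>i<j. (0::'a) ^ e i) * (\<Prod>i\<in>{j<..n}. sum_powers (e i))"
  have "?T j = 0" if "j \<in> {..n} - {0}" for j
    using that assms(1) by (auto intro!: prod_zero bexI[of _ 0])
  then have "(proj_power_sum n e :: 'a) = ?T 0"
    unfolding proj_power_sum_by_lead by (subst sum.mono_neutral_right[of _ "{0}"]) auto
  also have "\<dots> = (\<Prod>i\<in>{0<..n}. sum_powers (e i))"
    by simp
  also have "\<dots> = (\<Prod>i\<in>{0<..n}. -1)"
    by (rule prod.cong) (use assms(2) sum_powers_CARD_minus_1[where 'a='a] in auto)
  finally show ?thesis by simp
qed

lemma proj_power_sum_last:
  assumes "\<not> (CARD('a) - 1) dvd m"
  shows "(proj_power_sum n (\<lambda>i. if i = n then m else 0) :: 'a::{finite,field}) = 1"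
proof -
  let ?e = "\<lambda>i. if i = n then m else 0"
  let ?T = "\<lambda>j. (\<Prod>i<j. (0::'a) ^ ?e i) * (\<Prod>i\<in>{j<..n}. sum_powers (?e i))"
  have "?T j = 0" if "j \<in> {..n} - {n}" for j
    using that sum_powers_eq_0_if_not_dvd[OF assms] by (auto intro!: prod_zero bexI[of _ n])
  then have "(proj_power_sum n ?e :: 'a) = ?T n"
    unfolding proj_power_sum_by_lead by (subst sum.mono_neutral_right[of _ "{n}"]) auto
  then show ?thesis by simp
qed

lemma Least_nonzero_proj_reps_lead:
  assumes "p \<in> proj_reps_lead n j"
  shows "(LEAST i. p i \<noteq> 0) = j"
  using assms by (intro Least_equality) (auto simp: proj_reps_lead_def not_less[symmetric])

lemma bij_betw_scale_proj_reps:
  "bij_betw (\<lambda>(c, p) i. c * p i) ((UNIV - {0}) \<times> proj_reps n)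
     (agree_outside {..n} (\<lambda>_. 0) - {\<lambda>_. 0 :: 'a::field})"
proof -
  let ?A = "(UNIV - {0}) \<times> proj_reps n :: ('a \<times> (nat \<Rightarrow> 'a)) set"
  let ?B = "agree_outside {..n} (\<lambda>_. 0) - {\<lambda>_. 0 :: 'a}"
  let ?s = "\<lambda>(c, p) i. c * p i :: 'a"
  let ?lead = "\<lambda>x :: nat \<Rightarrow> 'a. LEAST i. x i \<noteq> 0"
  let ?u = "\<lambda>x. (x (?lead x), \<lambda>i. x i / x (?lead x))"
  have lead: "x (?lead x) \<noteq> 0" "?lead x \<le> n" "\<forall>i < ?lead x. x i = 0" if "x \<in> ?B" for x
  proof -
    have "\<exists>i. x i \<noteq> 0"
      using that by auto
    then show "x (?lead x) \<noteq> 0"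
      by (rule LeastI_ex)
    then show "?lead x \<le> n"
      using that by (auto simp: agree_outside_def intro: ccontr)
    show "\<forall>i < ?lead x. x i = 0"
      using not_less_Least by blast
  qed
  have "\<forall>cp\<in>?A. ?u (?s cp) = cp"
  proof
    fix cp assume "cp \<in> ?A"
    then obtain c p j where "cp = (c, p)" "c \<noteq> 0" "p \<in> proj_reps_lead n j"
      by (auto simp: proj_reps_eq_UN_lead)
    then show "?u (?s cp) = cp"
      by (simp add: Least_nonzero_proj_reps_lead) (simp add: proj_reps_lead_def)
  qed
  moreover have "\<forall>x\<in>?B. ?s (?u x) = x"
    using lead(1) by (simp add: fun_eq_iff)
  moreover have "?s ` ?A \<subseteq> ?B"
  proof (rule image_subsetI)
    fix cp assume "cp \<in> ?A"
    then obtain c p j where "cp = (c, p)" "c \<noteq> 0" "p j = 1" "\<forall>i>n. p i = 0"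
      by (auto simp: proj_reps_def)
    then show "?s cp \<in> ?B"
      by (auto simp: agree_outside_def fun_eq_iff intro!: exI[of _ j])
  qed
  moreover have "?u ` ?B \<subseteq> ?A"
  proof (rule image_subsetI)
    fix x assume x: "x \<in> ?B"
    obtain l where l: "?lead x = l"
      by blast
    have "\<forall>i>n. x i = 0"
      using x by (simp add: agree_outside_def)
    with lead[OF x] show "?u x \<in> ?A"
      unfolding l by (auto simp: proj_reps_def)
  qed
  ultimately show ?thesis
    by (rule bij_betw_byWitness)
qed

lemma proj_power_sum_eq_0:
  assumes dvd: "(CARD('a) - 1) dvd (\<Sum>i\<le>n. e i)" and pos: "(\<Sum>i\<le>n. e i) > 0"
    and small: "i0 \<le> n" "e i0 < CARD('a) - 1"
  shows "(proj_power_sum n e :: 'a::{finite,field}) = 0"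
proof -
  let ?d = "\<Sum>i\<le>n. e i"
  let ?V = "agree_outside {..n} (\<lambda>_. 0) :: (nat \<Rightarrow> 'a) set"
  have "(\<Sum>x\<in>?V. monomial_at n e x) = (\<Prod>i\<le>n. sum_powers (e i) :: 'a)"
    unfolding monomial_at_def sum_powers_def by (rule sum_prod_agree_outside) simp
  also have "\<dots> = 0"
    using small sum_powers_eq_0_if_less[of "e i0", where 'a='a] by (intro prod_zero) auto
  finally have "(\<Sum>x\<in>?V. monomial_at n e x) = 0" .
  moreover have "monomial_at n e (\<lambda>_. 0 :: 'a) = 0"
    using pos by (simp add: monomial_at_def power_sum[symmetric])
  moreover have "(\<lambda>_. 0) \<in> ?V"
    by (simp add: agree_outside_def)
  ultimately have "(\<Sum>x\<in>?V - {\<lambda>_. 0}. monomial_at n e x) = 0"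
    by (simp add: sum.remove finite_agree_outside)
  \<comment> \<open>each nonzero vector is uniquely c p with c \<noteq> 0 and p a representative; as q - 1
    divides the degree, every scaling c contributes the full projective sum\<close>
  moreover have "(\<Sum>x\<in>?V - {\<lambda>_. 0}. monomial_at n e x)
      = (\<Sum>(c, p)\<in>(UNIV - {0}) \<times> proj_reps n. monomial_at n e (\<lambda>i. c * p i))"
    unfolding sum.reindex_bij_betw[OF bij_betw_scale_proj_reps, symmetric]
    by (simp add: case_prod_unfold)
  moreover have "\<dots> = (\<Sum>c\<in>UNIV - {0::'a}. c ^ ?d * proj_power_sum n e)"
    by (simp add: sum.cartesian_product[symmetric] monomial_at_scale proj_power_sum_def sum_distrib_left)
  moreover have "c ^ ?d = 1" if "c \<noteq> 0" for c :: 'a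
    using dvd power_CARD_minus_1[OF that] by (metis dvdE power_mult power_one)
  ultimately have "of_nat (CARD('a) - 1) * proj_power_sum n e = (0::'a)"
    by (simp add: card_Diff_subset)
  moreover have "of_nat (CARD('a) - 1) = (-1 :: 'a)"
    using CARD_field_ge_2[where 'a='a] by (simp add: of_nat_CARD_eq_0)
  ultimately show ?thesis
    by simp
qed

section \<open>Self-orthogonality of projective Reed-Muller codes\<close>

lemma finite_hom_exps: "finite (hom_exps n k)"
proof (rule finite_subset)
  show "hom_exps n k \<subseteq> {a. \<forall>i. (i \<in> {..n} \<longrightarrow> a i \<in> {..k}) \<and> (i \<notin> {..n} \<longrightarrow> a i = 0)}"
    by (auto simp: hom_exps_def intro: order.trans[OF member_le_sum[of _ "{..n}"]])
qed (rule finite_set_of_finite_funs; simp)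

lemma sum_eval_hom_mult:
  "(\<Sum>p\<in>proj_reps n. eval_hom n k c p * eval_hom n k d p) =
   (\<Sum>a\<in>hom_exps n k. \<Sum>b\<in>hom_exps n k.
      c a * d b * (proj_power_sum n (\<lambda>i. a i + b i) :: 'a::{finite,field}))"
proof -
  let ?H = "hom_exps n k" and ?R = "proj_reps n :: (nat \<Rightarrow> 'a) set"
  have "(\<Sum>p\<in>?R. eval_hom n k c p * eval_hom n k d p)
      = (\<Sum>p\<in>?R. \<Sum>a\<in>?H. \<Sum>b\<in>?H. c a * d b * monomial_at n (\<lambda>i. a i + b i) p)"
    unfolding eval_hom_def monomial_at_def[symmetric] sum_product
    by (intro sum.cong refl) (simp add: monomial_at_add[symmetric] algebra_simps)
  also have "\<dots> = (\<Sum>a\<in>?H. \<Sum>b\<in>?H. c a * d b * proj_power_sum n (\<lambda>i. a i + b i))"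
    by (simp add: sum.swap[of _ ?R] proj_power_sum_def sum_distrib_left)
  finally show ?thesis .
qed

lemma eval_hom_indicator:
  assumes "a \<in> hom_exps n k"
  shows "eval_hom n k (\<lambda>x. of_bool (x = a)) p = monomial_at n a p"
proof -
  have "hom_exps n k \<inter> {x. x = a} = {a}"
    using assms by auto
  then show ?thesis
    by (simp add: eval_hom_def monomial_at_def finite_hom_exps)
qed

lemma proj_RM_self_orthogonal_iff:
  "(proj_RM n k :: ((nat \<Rightarrow> 'a::{finite,field}) \<Rightarrow> 'a) set) \<subseteq> dual_code n (proj_RM n k) \<longleftrightarrow>
   (\<forall>a\<in>hom_exps n k. \<forall>b\<in>hom_exps n k. proj_power_sum n (\<lambda>i. a i + b i) = (0::'a))"
  (is "?C \<subseteq> dual_code n ?C \<longleftrightarrow> ?vanish")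
proof -
  let ?word = "\<lambda>c (p :: nat \<Rightarrow> 'a). if p \<in> proj_reps n then eval_hom n k c p else 0"
  have C: "?C = range ?word"
    by (auto simp: proj_RM_def)
  have inner: "(\<Sum>p\<in>proj_reps n. ?word c p * ?word d p)
      = (\<Sum>p\<in>proj_reps n. eval_hom n k c p * eval_hom n k d p)" for c d
    by simp
  show ?thesis
  proof
    assume self_orth: "?C \<subseteq> dual_code n ?C"
    show ?vanish
    proof (intro ballI)
      fix a b assume ab: "a \<in> hom_exps n k" "b \<in> hom_exps n k"
      let ?\<delta> = "\<lambda>a x. of_bool (x = a) :: 'a"
      have "?word (?\<delta> a) \<in> dual_code n ?C"
        using self_orth unfolding C by auto
      then have "\<forall>w\<in>range ?word. (\<Sum>p\<in>proj_reps n. ?word (?\<delta> a) p * w p) = 0"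
        by (simp add: dual_code_def C)
      from bspec[OF this rangeI]
      have "(\<Sum>p\<in>proj_reps n. ?word (?\<delta> a) p * ?word (?\<delta> b) p) = 0" .
      then show "proj_power_sum n (\<lambda>i. a i + b i) = (0::'a)"
        unfolding inner using ab
        by (simp add: eval_hom_indicator monomial_at_add proj_power_sum_def)
    qed
  next
    assume vanish: ?vanish
    show "?C \<subseteq> dual_code n ?C"
      unfolding dual_code_def C
      using vanish by (auto simp: sum_eval_hom_mult)
  qed
qed

lemma ex_le_sum_eq:
  fixes e :: "nat \<Rightarrow> nat"
  assumes "m \<le> (\<Sum>i\<le>n. e i)"
  shows "\<exists>a. (\<forall>i. a i \<le> e i) \<and> (\<forall>i>n. a i = 0) \<and> (\<Sum>i\<le>n. a i) = m"
  using assms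
proof (induction n arbitrary: m)
  case 0
  then show ?case
    by (intro exI[of _ "\<lambda>i. if i = 0 then m else 0"]) auto
next
  case (Suc n)
  show ?case
  proof (cases "m \<le> e (Suc n)")
    case True
    then show ?thesis
      by (intro exI[of _ "\<lambda>i. if i = Suc n then m else 0"]) auto
  next
    case False
    then have "m - e (Suc n) \<le> (\<Sum>i\<le>n. e i)"
      using Suc.prems by simp
    then obtain a where a: "\<forall>i. a i \<le> e i" "\<forall>i>n. a i = 0" "(\<Sum>i\<le>n. a i) = m - e (Suc n)"
      using Suc.IH by blast
    have "(\<Sum>i\<le>n. (a(Suc n := e (Suc n))) i) = (\<Sum>i\<le>n. a i)"
      by (rule sum.cong) auto
    with a False show ?thesis
      by (intro exI[of _ "a(Suc n := e (Suc n))"]) auto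
  qed
qed

lemma ex_hom_exps_add_eq:
  assumes "\<forall>i>n. e i = 0" and "(\<Sum>i\<le>n. e i) = 2 * k"
  shows "\<exists>a\<in>hom_exps n k. \<exists>b\<in>hom_exps n k. (\<lambda>i. a i + b i) = e"
proof -
  obtain a where a: "\<forall>i. a i \<le> e i" "\<forall>i>n. a i = 0" "(\<Sum>i\<le>n. a i) = k"
    using ex_le_sum_eq[where m = k and n = n and e = e] assms(2) by auto
  define b where "b i = e i - a i" for i
  have "(\<Sum>i\<le>n. b i) = (\<Sum>i\<le>n. e i) - (\<Sum>i\<le>n. a i)"
    unfolding b_def using a(1) by (intro sum_subtractf_nat) auto
  with a assms have "a \<in> hom_exps n k" "b \<in> hom_exps n k"
    by (simp_all add: hom_exps_def b_def)
  moreover have "(\<lambda>i. a i + b i) = e"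
    using a(1) by (simp add: fun_eq_iff b_def)
  ultimately show ?thesis
    by blast
qed

lemma proj_power_sum_hom_exps_eq_0:
  assumes "1 \<le> k" and "2 * k \<le> n * (CARD('a) - 1)" and "(CARD('a) - 1) dvd 2 * k"
    and "a \<in> hom_exps n k" and "b \<in> hom_exps n k"
  shows "(proj_power_sum n (\<lambda>i. a i + b i) :: 'a::{finite,field}) = 0"
proof -
  let ?e = "\<lambda>i. a i + b i"
  have deg: "(\<Sum>i\<le>n. ?e i) = 2 * k"
    using assms(4,5) by (simp add: hom_exps_def sum.distrib)
  \<comment> \<open>n + 1 exponents summing to at most n (q - 1) cannot all reach q - 1\<close>
  have "\<exists>i0\<le>n. ?e i0 < CARD('a) - 1"
  proof (rule ccontr)
    assume "\<not> ?thesis"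
    then have "(\<Sum>i\<le>n. CARD('a) - 1) \<le> (\<Sum>i\<le>n. ?e i)"
      by (intro sum_mono) auto
    then show False
      using deg assms(2) CARD_field_ge_2[where 'a='a] by simp
  qed
  then obtain i0 where "i0 \<le> n" "?e i0 < CARD('a) - 1"
    by blast
  with deg assms(1,3) show ?thesis
    by (intro proj_power_sum_eq_0) auto
qed

lemma ex_hom_exps_proj_power_sum_ne_0:
  assumes "\<not> (2 * k \<le> n * (CARD('a) - 1) \<and> (CARD('a) - 1) dvd 2 * k)"
  shows "\<exists>a\<in>hom_exps n k. \<exists>b\<in>hom_exps n k. (proj_power_sum n (\<lambda>i. a i + b i) :: 'a::{finite,field}) \<noteq> 0"
proof -
  have "\<exists>e. (\<forall>i>n. e i = 0) \<and> (\<Sum>i\<le>n. e i) = 2 * k \<and> (proj_power_sum n e :: 'a) \<noteq> 0"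
  proof (cases "2 * k \<le> n * (CARD('a) - 1)")
    case True
    then have "\<not> (CARD('a) - 1) dvd 2 * k"
      using assms by blast
    then show ?thesis
      by (intro exI[of _ "\<lambda>i. if i = n then 2 * k else 0"]) (simp add: proj_power_sum_last)
  next
    case False
    let ?e = "\<lambda>i. if i = 0 then 2 * k - n * (CARD('a) - 1) else if i \<le> n then CARD('a) - 1 else 0"
    have "(\<Sum>i\<le>n. ?e i) = ?e 0 + (\<Sum>i\<in>{0<..n}. ?e i)"
      by (simp add: atMost_atLeast0 sum.atLeast_Suc_atMost greaterThanAtMost_def atLeastSucAtMost_greaterThanAtMost)
    also have "\<dots> = 2 * k"
      using False by simp
    finally show ?thesis
      using False by (intro exI[of _ ?e]) (simp add: proj_power_sum_full_tail)
  qed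
  then show ?thesis
    using ex_hom_exps_add_eq by metis
qed

theorem mainTheorem5:
  fixes n k :: nat
  assumes "n \<ge> 1" and "1 \<le> k" and "k \<le> n * (CARD('a) - 1)"
  shows "((proj_RM n k :: ((nat \<Rightarrow> 'a::{finite,field}) \<Rightarrow> 'a) set) \<subseteq> dual_code n (proj_RM n k)
           \<longleftrightarrow> (2 * k \<le> n * (CARD('a) - 1) \<and> (2 * k) mod (CARD('a) - 1) = 0))
       \<and> ((2 * k \<le> n * (CARD('a) - 1) \<and> (2 * k) mod (CARD('a) - 1) = 0)
           \<longrightarrow> hull_code n (proj_RM n k :: ((nat \<Rightarrow> 'a) \<Rightarrow> 'a) set) = proj_RM n k)"
proof -
  let ?C = "proj_RM n k :: ((nat \<Rightarrow> 'a) \<Rightarrow> 'a) set"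
  let ?P = "2 * k \<le> n * (CARD('a) - 1) \<and> (CARD('a) - 1) dvd 2 * k"
  have self_orth: "?C \<subseteq> dual_code n ?C \<longleftrightarrow> ?P"
    unfolding proj_RM_self_orthogonal_iff
    using proj_power_sum_hom_exps_eq_0[OF assms(2)] ex_hom_exps_proj_power_sum_ne_0
    by blast
  then have "?P \<longrightarrow> hull_code n ?C = ?C"
    by (auto simp: hull_code_def)
  with self_orth show ?thesis
    by (simp add: dvd_eq_mod_eq_0)
qed

end
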